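(* For distinct $a,b\in H^2$ and $k\in\mathbb R$ let $S_k(a,b)=\{x\in H^2: d_H(x,a)^2-d_H(x,b)^2=k\}$. For $\mathsf x=(x_1,x_2)$, $\mathsf y=(y_1,y_2)$ in $H^2\times H^2$ with $x_i\ne y_i$ let $E_k(\mathsf x,\mathsf y)=S_k(x_1,y_1)\times S_k(y_2,x_2)$. Let $\mathsf x=(x_1,x_2)$, $\mathsf y=(y_1,y_2)$, $\mathsf z=(z_1,z_2)\in H^2\times H^2$ be such that $\mathsf y$ is between $\mathsf x$ and $\mathsf z$, and suppose $E_k(\mathsf x,\mathsf y)\cap E_l(\mathsf y,\mathsf z)\ne\emptyset$ for some $k,l\in\mathbb R$. Then there exists $m\in\mathbb R$ such that either $S_m(x_1,y_1)\cap S_m(y_1,z_1)\neq\emptyset$ or $S_m(y_2,x_2)\cap S_m(z_2,y_2)\neq\emptyset$.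
   Context: For $x,y,z\in H^2$, let $l_1=S_0(x,y)$ and $l_2=S_0(y,z)$ be the equidistant lines; if $l_1,l_2$ are disjoint, the complement of $l_1\cup l_2$ has three components, two half-planes bounded by $l_1$ resp. $l_2$, and a slab bounded by $l_1\cup l_2$. We say $y$ is between $x$ and $z$ if $l_1$ and $l_2$ are disjoint and $y$ lies in the slab. For points of $H^2\times H^2$, $\mathsf y$ is between $\mathsf x$ and $\mathsf z$ if for each $i=1,2$ the coordinate $y_i$ is between $x_i$ and $z_i$ in this sense. $d_H$ is the hyperbolic distance. *)

theory Defs
  imports "HOL-Analysis.Analysis"
begin

text \<open>Upper half-plane model of the hyperbolic plane.\<close>
definition H2 :: "complex set" where
  "H2 = {z. Im z > 0}"

definition dH :: "complex \<Rightarrow> complex \<Rightarrow> real" where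
  "dH z w = arcosh (1 + (cmod (z - w))\<^sup>2 / (2 * Im z * Im w))"

definition Sk :: "real \<Rightarrow> complex \<Rightarrow> complex \<Rightarrow> complex set" where
  "Sk k a b = {x \<in> H2. (dH x a)\<^sup>2 - (dH x b)\<^sup>2 = k}"

definition Ek :: "real \<Rightarrow> complex \<times> complex \<Rightarrow> complex \<times> complex \<Rightarrow> (complex \<times> complex) set" where
  "Ek k x y = Sk k (fst x) (fst y) \<times> Sk k (snd y) (snd x)"

text \<open>y is between x and z: the equidistant lines are disjoint and y lies in the slab,
  i.e. the component of the complement of both lines containing y is adjacent to both lines.\<close>
definition between1 :: "complex \<Rightarrow> complex \<Rightarrow> complex \<Rightarrow> bool" where
  "between1 x y z \<longleftrightarrow>
     (let l1 = Sk 0 x y; l2 = Sk 0 y z;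
          C = connected_component_set (H2 - (l1 \<union> l2)) y
      in l1 \<inter> l2 = {} \<and> y \<in> C \<and> closure C \<inter> l1 \<noteq> {} \<and> closure C \<inter> l2 \<noteq> {})"

definition between2 :: "complex \<times> complex \<Rightarrow> complex \<times> complex \<Rightarrow> complex \<times> complex \<Rightarrow> bool" where
  "between2 x y z \<longleftrightarrow> between1 (fst x) (fst y) (fst z) \<and> between1 (snd x) (snd y) (snd z)"

end

theory Submission
  imports Defs
begin

text \<open>A point q lies in some S_m(a,b) \<inter> S_m(b,c) exactly when
  h(q) = d(q,a)^2 - 2 d(q,b)^2 + d(q,c)^2 vanishes. This continuous function is nonnegative
  at q = b, and at a point of S_k(a,b) \<inter> S_l(b,c) it equals k - l; so when k \<le> l the
  intermediate value theorem on the connected half-plane produces a zero. A common point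
  of E_k(x,y) and E_l(y,z) lies in S_k(x_1,y_1) \<inter> S_l(y_1,z_1) and in
  S_l(z_2,y_2) \<inter> S_k(y_2,x_2), and one of k \<le> l, l \<le> k always holds.\<close>

lemma connected_H2: "connected H2"
  unfolding H2_def by (rule connected_halfspace_Im_gt)

lemma continuous_on_dH:
  assumes "a \<in> H2"
  shows "continuous_on H2 (\<lambda>p. dH p a)"
  unfolding dH_def
proof (rule continuous_on_compose2[OF continuous_on_arcosh[of "{1..}"]])
  show "continuous_on H2 (\<lambda>p. 1 + (cmod (p - a))\<^sup>2 / (2 * Im p * Im a))"
    using assms by (intro continuous_intros) (auto simp: H2_def)
  show "(\<lambda>p. 1 + (cmod (p - a))\<^sup>2 / (2 * Im p * Im a)) ` H2 \<subseteq> {1..}"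
    using assms by (auto simp: H2_def)
qed auto

lemma dH_self [simp]: "dH a a = 0"
  by (simp add: dH_def)

lemma Sk_Int_Sk_common_level:
  assumes "a \<in> H2" "b \<in> H2" "c \<in> H2"
    and "Sk k a b \<inter> Sk l b c \<noteq> {}" "k \<le> l"
  shows "\<exists>m. Sk m a b \<inter> Sk m b c \<noteq> {}"
proof -
  define h where "h p = (dH p a)\<^sup>2 - 2 * (dH p b)\<^sup>2 + (dH p c)\<^sup>2" for p
  obtain p where p: "p \<in> Sk k a b" "p \<in> Sk l b c"
    using assms(4) by blast
  have "continuous_on H2 h"
    unfolding h_def using assms(1-3) by (intro continuous_intros continuous_on_dH)
  then have "connected (h ` H2)"
    using connected_H2 by (rule connected_continuous_image)
  moreover have "h p \<le> 0"
    using p assms(5) by (simp add: h_def Sk_def)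
  moreover have "0 \<le> h b"
    by (simp add: h_def)
  moreover have "p \<in> H2"
    using p by (simp add: Sk_def)
  ultimately have "0 \<in> h ` H2"
    using assms(2) by (blast intro: connectedD_interval)
  then obtain q where "q \<in> H2" "h q = 0"
    by (metis imageE)
  then have "q \<in> Sk m a b \<inter> Sk m b c" if "m = (dH q a)\<^sup>2 - (dH q b)\<^sup>2" for m
    using that by (simp add: Sk_def h_def)
  then show ?thesis
    by blast
qed

theorem mainTheorem6:
  fixes x1 x2 y1 y2 z1 z2 :: complex and k l :: real
  assumes "x1 \<in> H2" "x2 \<in> H2" "y1 \<in> H2" "y2 \<in> H2" "z1 \<in> H2" "z2 \<in> H2"
    and "between2 (x1, x2) (y1, y2) (z1, z2)"
    and "Ek k (x1, x2) (y1, y2) \<inter> Ek l (y1, y2) (z1, z2) \<noteq> {}"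
  shows "\<exists>m::real. Sk m x1 y1 \<inter> Sk m y1 z1 \<noteq> {} \<or> Sk m y2 x2 \<inter> Sk m z2 y2 \<noteq> {}"
proof (cases "k \<le> l")
  case True
  have "Sk k x1 y1 \<inter> Sk l y1 z1 \<noteq> {}"
    using assms(8) by (auto simp: Ek_def)
  then show ?thesis
    using Sk_Int_Sk_common_level[OF assms(1,3,5)] True by blast
next
  case False
  have "Sk l z2 y2 \<inter> Sk k y2 x2 \<noteq> {}"
    using assms(8) by (auto simp: Ek_def)
  then have "\<exists>m. Sk m z2 y2 \<inter> Sk m y2 x2 \<noteq> {}"
    using Sk_Int_Sk_common_level[OF assms(6,4,2)] False by simp
  then show ?thesis
    by (auto simp: Int_commute)
qed

end
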